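(* Let $\mathcal C$ be a small cylinder category. A morphism of $\mathcal C$ is a weak equivalence in $\mathcal C$ if and only if (its Yoneda image) is a weak equivalence in $\widetilde{\mathcal C}$.
   Context: A cylinder category is a category $\mathcal C$ with two classes of morphisms, the cofibrations and the weak equivalences (morphisms in both classes are called trivial cofibrations), such that: (1) both classes contain all isomorphisms and are closed under composition; (2) weak equivalences satisfy 2-out-of-6: if $f,g,h$ are composable and $f\circ g$, $g\circ h$ are weak equivalences then $f,g,h,f\circ g\circ h$ are; (3) $\mathcal C$ has an initial object $0$ and every $0\to X$ is a cofibration; (4) pushouts of cofibrations along arbitrary maps exist and are cofibrations; (5) pushouts of trivial cofibrations are trivial cofibrations; (6) for every object $X$ the codiagonal $X\sqcup X\to X$ factors as a cofibration $X\sqcup X\hookrightarrow IX$ followed by a weak equivalence $IX\to X$; (7) every trivial cofibration admits a retraction. For a cofibration $A\hookrightarrow B$, a relative cylinder object is a factorization $B\sqcup_A B\hookrightarrow I_AB\xrightarrow{\sim}B$ of the codiagonal into a cofibration followed by a weak equivalence. For a small cylinder category $\mathcal C$, $\widetilde{\mathcal C}$ is the category of presheaves of sets on $\mathcal C$ sending the initial object to a singleton and pushouts along cofibrations to pullbacks of sets; $\mathcal C$ is identified with its image under the Yoneda embedding. A morphism $f:X\to Y$ of $\widetilde{\mathcal C}$ is a weak equivalence if for every cofibration $i:A\hookrightarrow B$ of $\mathcal C$ and every commutative square with top $u:A\to X$ and bottom $w:B\to Y$ (so $f\circ u=w\circ i$), there exist $a:B\to X$ with $a\circ i=u$ and $h:I_AB\to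 Y$ for some relative cylinder object such that $h$ restricted along the two inclusions $B\to I_AB$ is $f\circ a$ and $w$. *)

theory Defs
  imports Main
begin

text \<open>A small category: objects of type 'o, arrows of type 'm, carriers given as sets.
  Comp g f is the composite g after f (defined when Cod f = Dom g).\<close>

record ('o, 'm) cat =
  Obj :: "'o set"
  Arr :: "'m set"
  Dom :: "'m \<Rightarrow> 'o"
  Cod :: "'m \<Rightarrow> 'o"
  Id  :: "'o \<Rightarrow> 'm"
  Comp :: "'m \<Rightarrow> 'm \<Rightarrow> 'm"

definition hom :: "('o, 'm) cat \<Rightarrow> 'o \<Rightarrow> 'o \<Rightarrow> 'm set" where
  "hom C A B = {f \<in> Arr C. Dom C f = A \<and> Cod C f = B}"

definition category :: "('o, 'm) cat \<Rightarrow> bool" where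
  "category C \<longleftrightarrow>
     (\<forall>f\<in>Arr C. Dom C f \<in> Obj C \<and> Cod C f \<in> Obj C) \<and>
     (\<forall>A\<in>Obj C. Id C A \<in> hom C A A) \<and>
     (\<forall>f\<in>Arr C. \<forall>g\<in>Arr C. Cod C f = Dom C g \<longrightarrow>
        Comp C g f \<in> hom C (Dom C f) (Cod C g)) \<and>
     (\<forall>f\<in>Arr C. \<forall>g\<in>Arr C. \<forall>h\<in>Arr C. Cod C f = Dom C g \<longrightarrow> Cod C g = Dom C h \<longrightarrow>
        Comp C h (Comp C g f) = Comp C (Comp C h g) f) \<and>
     (\<forall>f\<in>Arr C. Comp C (Id C (Cod C f)) f = f \<and> Comp C f (Id C (Dom C f)) = f)"

definition iso :: "('o, 'm) cat \<Rightarrow> 'm \<Rightarrow> bool" where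
  "iso C f \<longleftrightarrow> f \<in> Arr C \<and>
     (\<exists>g\<in>hom C (Cod C f) (Dom C f). Comp C g f = Id C (Dom C f) \<and> Comp C f g = Id C (Cod C f))"

definition initial :: "('o, 'm) cat \<Rightarrow> 'o \<Rightarrow> bool" where
  "initial C z \<longleftrightarrow> z \<in> Obj C \<and> (\<forall>X\<in>Obj C. \<exists>!f. f \<in> hom C z X)"

definition pushout :: "('o, 'm) cat \<Rightarrow> 'm \<Rightarrow> 'm \<Rightarrow> 'm \<Rightarrow> 'm \<Rightarrow> bool" where
  "pushout C i f k j \<longleftrightarrow>
     i \<in> Arr C \<and> f \<in> Arr C \<and> k \<in> Arr C \<and> j \<in> Arr C \<and>
     Dom C i = Dom C f \<and> Dom C k = Cod C i \<and> Dom C j = Cod C f \<and> Cod C k = Cod C j \<and>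
     Comp C k i = Comp C j f \<and>
     (\<forall>Q g h. g \<in> hom C (Cod C i) Q \<and> h \<in> hom C (Cod C f) Q \<and> Comp C g i = Comp C h f \<longrightarrow>
        (\<exists>!u. u \<in> hom C (Cod C k) Q \<and> Comp C u k = g \<and> Comp C u j = h))"

definition cylinder_category :: "('o, 'm) cat \<Rightarrow> 'm set \<Rightarrow> 'm set \<Rightarrow> bool" where
  "cylinder_category C cof we \<longleftrightarrow>
     category C \<and> cof \<subseteq> Arr C \<and> we \<subseteq> Arr C \<and>
     \<comment> \<open>(1)\<close>
     (\<forall>f. iso C f \<longrightarrow> f \<in> cof \<and> f \<in> we) \<and>
     (\<forall>f\<in>cof. \<forall>g\<in>cof. Cod C f = Dom C g \<longrightarrow> Comp C g f \<in> cof) \<and>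
     (\<forall>f\<in>we. \<forall>g\<in>we. Cod C f = Dom C g \<longrightarrow> Comp C g f \<in> we) \<and>
     \<comment> \<open>(2) 2-out-of-6\<close>
     (\<forall>f g h. f \<in> Arr C \<and> g \<in> Arr C \<and> h \<in> Arr C \<and> Cod C h = Dom C g \<and> Cod C g = Dom C f \<and>
        Comp C f g \<in> we \<and> Comp C g h \<in> we \<longrightarrow>
        f \<in> we \<and> g \<in> we \<and> h \<in> we \<and> Comp C f (Comp C g h) \<in> we) \<and>
     \<comment> \<open>(3)\<close>
     (\<exists>z. initial C z) \<and>
     (\<forall>z X e. initial C z \<and> e \<in> hom C z X \<longrightarrow> e \<in> cof) \<and>
     \<comment> \<open>(4)\<close>
     (\<forall>i\<in>cof. \<forall>f\<in>Arr C. Dom C f = Dom C i \<longrightarrow> (\<exists>k j. pushout C i f k j)) \<and>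
     (\<forall>i f k j. i \<in> cof \<and> pushout C i f k j \<longrightarrow> j \<in> cof) \<and>
     \<comment> \<open>(5)\<close>
     (\<forall>i f k j. i \<in> cof \<and> i \<in> we \<and> pushout C i f k j \<longrightarrow> j \<in> cof \<and> j \<in> we) \<and>
     \<comment> \<open>(6): for every coproduct X \<squnion> X (pushout over the initial object), the codiagonal
        d (d \<circ> k = id, d \<circ> j = id) factors as a cofibration followed by a weak equivalence\<close>
     (\<forall>z X e k j d. initial C z \<and> X \<in> Obj C \<and> e \<in> hom C z X \<and> pushout C e e k j \<and>
        d \<in> hom C (Cod C k) X \<and> Comp C d k = Id C X \<and> Comp C d j = Id C X \<longrightarrow>
        (\<exists>c p. c \<in> cof \<and> p \<in> we \<and> Dom C c = Cod C k \<and> Cod C c = Dom C p \<and>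
               Cod C p = X \<and> Comp C p c = d)) \<and>
     \<comment> \<open>(7)\<close>
     (\<forall>i. i \<in> cof \<and> i \<in> we \<longrightarrow>
        (\<exists>r\<in>hom C (Cod C i) (Dom C i). Comp C r i = Id C (Dom C i)))"

text \<open>Relative cylinder object for a cofibration i : A \<rightarrow> B: a pushout B \<squnion>_A B (legs k, j)
  and a factorization p \<circ> c of the codiagonal with c a cofibration and p a weak equivalence.
  The two inclusions B \<rightarrow> I_A B are c \<circ> k and c \<circ> j.\<close>

definition rel_cyl :: "('o, 'm) cat \<Rightarrow> 'm set \<Rightarrow> 'm set \<Rightarrow> 'm \<Rightarrow> 'm \<Rightarrow> 'm \<Rightarrow> 'm \<Rightarrow> 'm \<Rightarrow> bool" where
  "rel_cyl C cof we i k j c p \<longleftrightarrow>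
     i \<in> cof \<and> pushout C i i k j \<and> c \<in> cof \<and> p \<in> we \<and>
     Dom C c = Cod C k \<and> Cod C c = Dom C p \<and> Cod C p = Cod C i \<and>
     Comp C (Comp C p c) k = Id C (Cod C i) \<and> Comp C (Comp C p c) j = Id C (Cod C i)"

record ('o, 'm, 'v) psh =
  PObj :: "'o \<Rightarrow> 'v set"
  PMap :: "'m \<Rightarrow> 'v \<Rightarrow> 'v"

definition presheaf :: "('o, 'm) cat \<Rightarrow> ('o, 'm, 'v) psh \<Rightarrow> bool" where
  "presheaf C F \<longleftrightarrow>
     (\<forall>f\<in>Arr C. \<forall>x\<in>PObj F (Cod C f). PMap F f x \<in> PObj F (Dom C f)) \<and>
     (\<forall>A\<in>Obj C. \<forall>x\<in>PObj F A. PMap F (Id C A) x = x) \<and>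
     (\<forall>f\<in>Arr C. \<forall>g\<in>Arr C. Cod C f = Dom C g \<longrightarrow>
        (\<forall>x\<in>PObj F (Cod C g). PMap F (Comp C g f) x = PMap F f (PMap F g x)))"

text \<open>Objects of C-tilde: presheaves sending the initial object to a singleton and pushouts
  along cofibrations to pullbacks of sets.\<close>

definition in_tilde :: "('o, 'm) cat \<Rightarrow> 'm set \<Rightarrow> ('o, 'm, 'v) psh \<Rightarrow> bool" where
  "in_tilde C cof F \<longleftrightarrow> presheaf C F \<and>
     (\<forall>z. initial C z \<longrightarrow> (\<exists>x. PObj F z = {x})) \<and>
     (\<forall>i f k j. i \<in> cof \<and> pushout C i f k j \<longrightarrow>
        bij_betw (\<lambda>x. (PMap F k x, PMap F j x)) (PObj F (Cod C k))
          {(b, c). b \<in> PObj F (Cod C i) \<and> c \<in> PObj F (Cod C f) \<and> PMap F i b = PMap F f c})"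

definition nat_trans :: "('o, 'm) cat \<Rightarrow> ('o, 'm, 'v) psh \<Rightarrow> ('o, 'm, 'w) psh \<Rightarrow>
    ('o \<Rightarrow> 'v \<Rightarrow> 'w) \<Rightarrow> bool" where
  "nat_trans C F G \<eta> \<longleftrightarrow>
     (\<forall>A\<in>Obj C. \<forall>x\<in>PObj F A. \<eta> A x \<in> PObj G A) \<and>
     (\<forall>f\<in>Arr C. \<forall>x\<in>PObj F (Cod C f). \<eta> (Dom C f) (PMap F f x) = PMap G f (\<eta> (Cod C f) x))"

definition nt_eq :: "('o, 'm) cat \<Rightarrow> ('o, 'm, 'v) psh \<Rightarrow> ('o \<Rightarrow> 'v \<Rightarrow> 'w) \<Rightarrow> ('o \<Rightarrow> 'v \<Rightarrow> 'w) \<Rightarrow> bool" where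
  "nt_eq C F \<eta> \<theta> \<longleftrightarrow> (\<forall>A\<in>Obj C. \<forall>x\<in>PObj F A. \<eta> A x = \<theta> A x)"

definition nt_comp :: "('o \<Rightarrow> 'v \<Rightarrow> 'w) \<Rightarrow> ('o \<Rightarrow> 'u \<Rightarrow> 'v) \<Rightarrow> ('o \<Rightarrow> 'u \<Rightarrow> 'w)" where
  "nt_comp \<eta> \<theta> = (\<lambda>A x. \<eta> A (\<theta> A x))"

definition yon :: "('o, 'm) cat \<Rightarrow> 'o \<Rightarrow> ('o, 'm, 'm) psh" where
  "yon C X = \<lparr>PObj = (\<lambda>A. hom C A X), PMap = (\<lambda>f g. Comp C g f)\<rparr>"

definition yon_arr :: "('o, 'm) cat \<Rightarrow> 'm \<Rightarrow> ('o \<Rightarrow> 'm \<Rightarrow> 'm)" where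
  "yon_arr C h = (\<lambda>A g. Comp C h g)"

definition we_tilde :: "('o, 'm) cat \<Rightarrow> 'm set \<Rightarrow> 'm set \<Rightarrow>
    ('o, 'm, 'v) psh \<Rightarrow> ('o, 'm, 'w) psh \<Rightarrow> ('o \<Rightarrow> 'v \<Rightarrow> 'w) \<Rightarrow> bool" where
  "we_tilde C cof we X Y f \<longleftrightarrow>
     in_tilde C cof X \<and> in_tilde C cof Y \<and> nat_trans C X Y f \<and>
     (\<forall>i u w. i \<in> cof \<and>
        nat_trans C (yon C (Dom C i)) X u \<and> nat_trans C (yon C (Cod C i)) Y w \<and>
        nt_eq C (yon C (Dom C i)) (nt_comp f u) (nt_comp w (yon_arr C i)) \<longrightarrow>
        (\<exists>a. nat_trans C (yon C (Cod C i)) X a \<and>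
             nt_eq C (yon C (Dom C i)) (nt_comp a (yon_arr C i)) u \<and>
             (\<exists>k j c p h. rel_cyl C cof we i k j c p \<and>
                nat_trans C (yon C (Cod C c)) Y h \<and>
                nt_eq C (yon C (Cod C i)) (nt_comp h (yon_arr C (Comp C c k))) (nt_comp f a) \<and>
                nt_eq C (yon C (Cod C i)) (nt_comp h (yon_arr C (Comp C c j))) w)))"

end

theory Submission
  imports Defs
begin

text \<open>By the Yoneda lemma, the image of \<open>f\<close> is a weak equivalence of \<open>C-tilde\<close> iff \<open>f\<close> has a
  relative homotopy lifting property against every cofibration of \<open>C\<close>. A weak equivalence has it:
  pushing a square out along the cofibration and factoring the induced map to the codomain factors
  the square through a trivial cofibration \<open>e : X \<rightarrow> N\<close>; a retraction of \<open>e\<close> gives the lift, and the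
  homotopy comes from extending the two legs \<open>N \<rightarrow> N \<squnion>\<^sub>X N\<close> along the relative cylinder, which
  works because the codiagonal of \<open>N \<squnion>\<^sub>X N\<close> is a weak equivalence. Conversely, factor \<open>f = p c\<close>
  with \<open>c\<close> a cofibration and \<open>p\<close> a weak equivalence (Brown's factorization via the mapping
  cylinder) and lift the square \<open>(id, p)\<close> against \<open>c\<close>: this gives a retraction \<open>a\<close> of \<open>c\<close> with
  \<open>c a\<close> homotopic to the identity, so \<open>c a\<close> is a weak equivalence and 2-out-of-6 applied to
  \<open>c, a, c\<close> shows that \<open>c\<close>, hence \<open>f\<close>, is one.\<close>

locale small_cat =
  fixes C :: "('o, 'm) cat"
  assumes category: "category C"
begin

abbreviation comp :: "'m \<Rightarrow> 'm \<Rightarrow> 'm" (infixr "\<cdot>" 55) where "g \<cdot> f \<equiv> Comp C g f"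

lemma Dom_Obj: "f \<in> Arr C \<Longrightarrow> Dom C f \<in> Obj C"
  and Cod_Obj: "f \<in> Arr C \<Longrightarrow> Cod C f \<in> Obj C"
  using category unfolding category_def by blast+

lemma comp_Arr [simp]: "f \<in> Arr C \<Longrightarrow> g \<in> Arr C \<Longrightarrow> Cod C f = Dom C g \<Longrightarrow> g \<cdot> f \<in> Arr C"
  and Dom_comp [simp]: "f \<in> Arr C \<Longrightarrow> g \<in> Arr C \<Longrightarrow> Cod C f = Dom C g \<Longrightarrow> Dom C (g \<cdot> f) = Dom C f"
  and Cod_comp [simp]: "f \<in> Arr C \<Longrightarrow> g \<in> Arr C \<Longrightarrow> Cod C f = Dom C g \<Longrightarrow> Cod C (g \<cdot> f) = Cod C g"
  using category unfolding category_def hom_def by blast+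

lemma comp_assoc [simp]:
  "f \<in> Arr C \<Longrightarrow> g \<in> Arr C \<Longrightarrow> h \<in> Arr C \<Longrightarrow> Cod C f = Dom C g \<Longrightarrow> Cod C g = Dom C h \<Longrightarrow>
   (h \<cdot> g) \<cdot> f = h \<cdot> (g \<cdot> f)"
  using category unfolding category_def by metis

lemma Id_Arr [simp]: "A \<in> Obj C \<Longrightarrow> Id C A \<in> Arr C"
  and Dom_Id [simp]: "A \<in> Obj C \<Longrightarrow> Dom C (Id C A) = A"
  and Cod_Id [simp]: "A \<in> Obj C \<Longrightarrow> Cod C (Id C A) = A"
  using category unfolding category_def hom_def by blast+

lemma comp_Id_left [simp]: "f \<in> Arr C \<Longrightarrow> Cod C f = B \<Longrightarrow> Id C B \<cdot> f = f"
  and comp_Id_right [simp]: "f \<in> Arr C \<Longrightarrow> Dom C f = A \<Longrightarrow> f \<cdot> Id C A = f"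
  using category unfolding category_def by blast+

lemma homD: "f \<in> hom C A B \<Longrightarrow> f \<in> Arr C \<and> Dom C f = A \<and> Cod C f = B"
  unfolding hom_def by blast

lemma hom_Obj: "f \<in> hom C A B \<Longrightarrow> A \<in> Obj C \<and> B \<in> Obj C"
  using Dom_Obj Cod_Obj homD by blast

lemma comp_hom: "f \<in> hom C A B \<Longrightarrow> g \<in> hom C B D \<Longrightarrow> g \<cdot> f \<in> hom C A D"
  by (simp add: hom_def)

lemma Id_hom: "A \<in> Obj C \<Longrightarrow> Id C A \<in> hom C A A"
  by (simp add: hom_def)

lemma iso_Id: "A \<in> Obj C \<Longrightarrow> iso C (Id C A)"
  unfolding iso_def by (auto intro!: bexI[of _ "Id C A"] simp: hom_def)

lemma comp_reassoc:
  "g \<cdot> f = h \<Longrightarrow> f \<in> Arr C \<Longrightarrow> g \<in> Arr C \<Longrightarrow> Cod C f = Dom C g \<Longrightarrow> x \<in> Arr C \<Longrightarrow> Cod C x = Dom C f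
   \<Longrightarrow> g \<cdot> (f \<cdot> x) = h \<cdot> x"
  by (metis comp_assoc)

lemma pushoutD:
  "pushout C i f k j \<Longrightarrow> i \<in> Arr C \<and> f \<in> Arr C \<and> k \<in> Arr C \<and> j \<in> Arr C \<and>
   Dom C f = Dom C i \<and> Dom C k = Cod C i \<and> Dom C j = Cod C f \<and> Cod C j = Cod C k \<and> k \<cdot> i = j \<cdot> f"
  unfolding pushout_def by auto

lemma pushout_hom:
  assumes "pushout C i f k j" and "i \<in> hom C A B" and "f \<in> hom C A D"
  shows "k \<in> hom C B (Cod C k)" and "j \<in> hom C D (Cod C k)"
  using pushoutD[OF assms(1)] assms(2,3) by (auto simp: hom_def)

lemma pushout_sym: "pushout C i f k j \<Longrightarrow> pushout C f i j k"
  unfolding pushout_def by metis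

lemma pushout_copair:
  "pushout C i f k j \<Longrightarrow> g \<in> hom C (Cod C i) Q \<Longrightarrow> h \<in> hom C (Cod C f) Q \<Longrightarrow> g \<cdot> i = h \<cdot> f
   \<Longrightarrow> \<exists>u. u \<in> hom C (Cod C k) Q \<and> u \<cdot> k = g \<and> u \<cdot> j = h"
  unfolding pushout_def by blast

lemma pushout_eqI:
  assumes P: "pushout C i f k j" and u: "u \<in> hom C (Cod C k) Q" and v: "v \<in> hom C (Cod C k) Q"
    and "u \<cdot> k = v \<cdot> k" "u \<cdot> j = v \<cdot> j"
  shows "u = v"
proof -
  note d = pushoutD[OF P]
  have "(u \<cdot> k) \<cdot> i = (u \<cdot> j) \<cdot> f" and "u \<cdot> k \<in> hom C (Cod C i) Q" "u \<cdot> j \<in> hom C (Cod C f) Q"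
    using d u by (auto simp: hom_def)
  then have "\<exists>!w. w \<in> hom C (Cod C k) Q \<and> w \<cdot> k = u \<cdot> k \<and> w \<cdot> j = u \<cdot> j"
    using P unfolding pushout_def by blast
  then show ?thesis using assms by metis
qed

lemma pushout_paste:
  assumes P: "pushout C i f k j" and P': "pushout C i' k k' j'"
  shows "pushout C (i' \<cdot> i) f k' (j' \<cdot> j)"
proof -
  note d = pushoutD[OF P] and d' = pushoutD[OF P']
  have square: "k' \<cdot> (i' \<cdot> i) = (j' \<cdot> j) \<cdot> f"
    using d d' comp_reassoc[of k' i' "j' \<cdot> k"] by simp
  have univ: "\<exists>!u. u \<in> hom C (Cod C k') R \<and> u \<cdot> k' = g \<and> u \<cdot> (j' \<cdot> j) = h"
    if g: "g \<in> hom C (Cod C i') R" and h: "h \<in> hom C (Cod C f) R" and gh: "g \<cdot> (i' \<cdot> i) = h \<cdot> f"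
    for R g h
  proof -
    have "(g \<cdot> i') \<cdot> i = h \<cdot> f" using gh g d d' by (simp add: hom_def)
    then obtain v where v: "v \<in> hom C (Cod C k) R" "v \<cdot> k = g \<cdot> i'" "v \<cdot> j = h"
      using pushout_copair[OF P, of "g \<cdot> i'" R h] g h d d' by (auto simp: hom_def)
    then obtain u where u: "u \<in> hom C (Cod C k') R" "u \<cdot> k' = g" "u \<cdot> j' = v"
      using pushout_copair[OF P', of g R v] g d d' by (auto simp: hom_def)
    show ?thesis
    proof (rule ex1I)
      show "u \<in> hom C (Cod C k') R \<and> u \<cdot> k' = g \<and> u \<cdot> (j' \<cdot> j) = h"
        using u v d d' comp_reassoc[OF u(3)] by (auto simp: hom_def)
    next
      fix u' assume u': "u' \<in> hom C (Cod C k') R \<and> u' \<cdot> k' = g \<and> u' \<cdot> (j' \<cdot> j) = h"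
      have "u' \<cdot> j' = v"
      proof (rule pushout_eqI[OF P _ v(1)])
        show "u' \<cdot> j' \<in> hom C (Cod C k) R" using u' d' by (auto simp: hom_def)
        show "(u' \<cdot> j') \<cdot> k = v \<cdot> k"
          using u' v d' comp_reassoc[of "u'" k' g i'] by (auto simp: hom_def)
        show "(u' \<cdot> j') \<cdot> j = v \<cdot> j" using u' v d d' by (auto simp: hom_def)
      qed
      then show "u' = u" using pushout_eqI[OF P', of u' R u] u u' by auto
    qed
  qed
  show ?thesis
    unfolding pushout_def using d d' square univ by auto
qed


subsection \<open>Representable presheaves\<close>

lemma yon_in_tilde:
  assumes X: "X \<in> Obj C"
  shows "in_tilde C cof (yon C X)"
  unfolding in_tilde_def
proof (intro conjI allI impI)
  show "presheaf C (yon C X)" unfolding presheaf_def yon_def by (auto simp: hom_def)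
next
  fix z assume "initial C z"
  then obtain e where "e \<in> hom C z X" "\<forall>e'. e' \<in> hom C z X \<longrightarrow> e' = e"
    using X unfolding initial_def by blast
  then show "\<exists>x. PObj (yon C X) z = {x}" unfolding yon_def by auto
next
  fix i f k j assume "i \<in> cof \<and> pushout C i f k j"
  then have P: "pushout C i f k j" by blast
  note d = pushoutD[OF P]
  have "inj_on (\<lambda>x. (x \<cdot> k, x \<cdot> j)) (hom C (Cod C k) X)"
    by (rule inj_onI) (use pushout_eqI[OF P] in auto)
  moreover have "(\<lambda>x. (x \<cdot> k, x \<cdot> j)) ` hom C (Cod C k) X =
      {(b, c). b \<in> hom C (Cod C i) X \<and> c \<in> hom C (Cod C f) X \<and> b \<cdot> i = c \<cdot> f}"
  proof (intro equalityI subsetI)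
    fix y assume "y \<in> (\<lambda>x. (x \<cdot> k, x \<cdot> j)) ` hom C (Cod C k) X"
    then obtain x where x: "x \<in> hom C (Cod C k) X" and y: "y = (x \<cdot> k, x \<cdot> j)" by blast
    then show "y \<in> {(b, c). b \<in> hom C (Cod C i) X \<and> c \<in> hom C (Cod C f) X \<and> b \<cdot> i = c \<cdot> f}"
      using d comp_reassoc[of k i "j \<cdot> f" x] by (auto simp: hom_def)
  next
    fix y assume "y \<in> {(b, c). b \<in> hom C (Cod C i) X \<and> c \<in> hom C (Cod C f) X \<and> b \<cdot> i = c \<cdot> f}"
    then obtain b c where "y = (b, c)" "b \<in> hom C (Cod C i) X" "c \<in> hom C (Cod C f) X" "b \<cdot> i = c \<cdot> f"
      by blast
    with pushout_copair[OF P] show "y \<in> (\<lambda>x. (x \<cdot> k, x \<cdot> j)) ` hom C (Cod C k) X" by force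
  qed
  ultimately show "bij_betw (\<lambda>x. (PMap (yon C X) k x, PMap (yon C X) j x)) (PObj (yon C X) (Cod C k))
      {(b, c). b \<in> PObj (yon C X) (Cod C i) \<and> c \<in> PObj (yon C X) (Cod C f) \<and>
               PMap (yon C X) i b = PMap (yon C X) f c}"
    unfolding yon_def bij_betw_def by simp
qed

lemma yon_arr_nat_trans: "g \<in> hom C A X \<Longrightarrow> nat_trans C (yon C A) (yon C X) (yon_arr C g)"
  unfolding nat_trans_def yon_def yon_arr_def by (auto simp: hom_def)

lemma nat_trans_comp:
  "nat_trans C F G \<eta> \<Longrightarrow> nat_trans C G H \<theta> \<Longrightarrow> nat_trans C F H (nt_comp \<theta> \<eta>)"
  unfolding nat_trans_def nt_comp_def by (simp add: Dom_Obj Cod_Obj)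

lemma nat_trans_yon_Id:
  "A \<in> Obj C \<Longrightarrow> nat_trans C (yon C A) (yon C X) \<eta> \<Longrightarrow> \<eta> A (Id C A) \<in> hom C A X"
  unfolding nat_trans_def yon_def using Id_hom by simp

lemma nat_trans_yon_apply:
  assumes "nat_trans C (yon C A) (yon C X) \<eta>" and "x \<in> hom C D A"
  shows "\<eta> D x = \<eta> A (Id C A) \<cdot> x"
proof -
  have "A \<in> Obj C" using assms(2) hom_Obj by blast
  then show ?thesis
    using assms homD[OF assms(2)] Id_hom unfolding nat_trans_def yon_def by force
qed

lemma nt_eq_yonD: "nt_eq C (yon C A) \<eta> \<theta> \<Longrightarrow> A \<in> Obj C \<Longrightarrow> \<eta> A (Id C A) = \<theta> A (Id C A)"
  unfolding nt_eq_def yon_def using Id_hom by simp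

lemma nt_eq_yonI:
  assumes "nat_trans C (yon C A) G \<eta>" "nat_trans C (yon C A) G \<theta>" "\<eta> A (Id C A) = \<theta> A (Id C A)"
  shows "nt_eq C (yon C A) \<eta> \<theta>"
  unfolding nt_eq_def
proof (intro ballI)
  fix D x assume x: "x \<in> PObj (yon C A) D"
  then have x: "x \<in> hom C D A" and A: "A \<in> Obj C" by (auto simp: yon_def dest: hom_Obj)
  have yoneda: "\<kappa> D x = PMap G x (\<kappa> A (Id C A))" if "nat_trans C (yon C A) G \<kappa>" for \<kappa>
    using that x A homD[OF x] Id_hom[OF A] unfolding nat_trans_def yon_def by force
  show "\<eta> D x = \<theta> D x" using yoneda[OF assms(1)] yoneda[OF assms(2)] assms(3) by simp
qed

end

text \<open>The lifting condition in the definition of \<open>we_tilde\<close>, transported along the Yoneda embedding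
  to an arrow of \<open>C\<close>.\<close>

definition homotopy_lifting :: "('o, 'm) cat \<Rightarrow> 'm set \<Rightarrow> 'm set \<Rightarrow> 'm \<Rightarrow> bool" where
  "homotopy_lifting C cof we f \<longleftrightarrow>
     (\<forall>i u w. i \<in> cof \<and> u \<in> hom C (Dom C i) (Dom C f) \<and> w \<in> hom C (Cod C i) (Cod C f) \<and>
        Comp C f u = Comp C w i \<longrightarrow>
        (\<exists>a\<in>hom C (Cod C i) (Dom C f). Comp C a i = u \<and>
           (\<exists>k j c p h. rel_cyl C cof we i k j c p \<and> h \<in> hom C (Cod C c) (Cod C f) \<and>
              Comp C h (Comp C c k) = Comp C f a \<and> Comp C h (Comp C c j) = w)))"

context small_cat
begin

lemma rel_cyl_inclusions_hom:
  assumes "cof \<subseteq> Arr C" and "rel_cyl C cof we i k j c p"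
  shows "c \<cdot> k \<in> hom C (Cod C i) (Cod C c)" and "c \<cdot> j \<in> hom C (Cod C i) (Cod C c)"
  using assms pushoutD unfolding rel_cyl_def by (auto simp: hom_def)

lemma homotopy_lifting_if_we_tilde:
  assumes cof: "cof \<subseteq> Arr C" and f: "f \<in> hom C X Y"
    and W: "we_tilde C cof we (yon C X) (yon C Y) (yon_arr C f)"
  shows "homotopy_lifting C cof we f"
  unfolding homotopy_lifting_def
proof (intro allI impI)
  fix i u0 w0
  assume "i \<in> cof \<and> u0 \<in> hom C (Dom C i) (Dom C f) \<and> w0 \<in> hom C (Cod C i) (Cod C f) \<and>
    f \<cdot> u0 = w0 \<cdot> i"
  then have i: "i \<in> cof" "i \<in> hom C (Dom C i) (Cod C i)" and u0: "u0 \<in> hom C (Dom C i) X"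
    and w0: "w0 \<in> hom C (Cod C i) Y" and square: "f \<cdot> u0 = w0 \<cdot> i"
    using cof homD[OF f] by (auto simp: hom_def)
  have A: "Dom C i \<in> Obj C" and B: "Cod C i \<in> Obj C" using hom_Obj[OF i(2)] by auto
  have "nt_eq C (yon C (Dom C i)) (nt_comp (yon_arr C f) (yon_arr C u0)) (nt_comp (yon_arr C w0) (yon_arr C i))"
    by (rule nt_eq_yonI[OF nat_trans_comp[OF yon_arr_nat_trans[OF u0] yon_arr_nat_trans[OF f]]
        nat_trans_comp[OF yon_arr_nat_trans[OF i(2)] yon_arr_nat_trans[OF w0]]])
      (use square A homD[OF i(2)] homD[OF u0] in \<open>simp add: nt_comp_def yon_arr_def\<close>)
  then obtain a k j c p h where a: "nat_trans C (yon C (Cod C i)) (yon C X) a"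
    and ai: "nt_eq C (yon C (Dom C i)) (nt_comp a (yon_arr C i)) (yon_arr C u0)"
    and R: "rel_cyl C cof we i k j c p" and h: "nat_trans C (yon C (Cod C c)) (yon C Y) h"
    and hk: "nt_eq C (yon C (Cod C i)) (nt_comp h (yon_arr C (c \<cdot> k))) (nt_comp (yon_arr C f) a)"
    and hj: "nt_eq C (yon C (Cod C i)) (nt_comp h (yon_arr C (c \<cdot> j))) (yon_arr C w0)"
    using W[unfolded we_tilde_def] i(1) yon_arr_nat_trans[OF u0] yon_arr_nat_trans[OF w0] by blast
  have ck: "c \<cdot> k \<in> hom C (Cod C i) (Cod C c)" and cj: "c \<cdot> j \<in> hom C (Cod C i) (Cod C c)"
    using rel_cyl_inclusions_hom[OF cof R] by auto
  have I: "Cod C c \<in> Obj C" using hom_Obj[OF ck] by blast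
  have "a (Dom C i) i = u0"
    using nt_eq_yonD[OF ai A] homD[OF i(2)] homD[OF u0] by (simp add: nt_comp_def yon_arr_def)
  moreover have "h (Cod C i) (c \<cdot> k) = f \<cdot> a (Cod C i) (Id C (Cod C i))"
    using nt_eq_yonD[OF hk B] homD[OF ck] by (simp add: nt_comp_def yon_arr_def)
  moreover have "h (Cod C i) (c \<cdot> j) = w0"
    using nt_eq_yonD[OF hj B] homD[OF cj] homD[OF w0] by (simp add: nt_comp_def yon_arr_def)
  ultimately show "\<exists>a0\<in>hom C (Cod C i) (Dom C f). a0 \<cdot> i = u0 \<and>
     (\<exists>k j c p h0. rel_cyl C cof we i k j c p \<and> h0 \<in> hom C (Cod C c) (Cod C f) \<and>
        h0 \<cdot> (c \<cdot> k) = f \<cdot> a0 \<and> h0 \<cdot> (c \<cdot> j) = w0)"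
    using R nat_trans_yon_Id[OF B a] nat_trans_yon_Id[OF I h] homD[OF f]
      nat_trans_yon_apply[OF a i(2)] nat_trans_yon_apply[OF h ck] nat_trans_yon_apply[OF h cj]
    by metis
qed

lemma we_tilde_if_homotopy_lifting:
  assumes cof: "cof \<subseteq> Arr C" and f: "f \<in> hom C X Y" and lifting: "homotopy_lifting C cof we f"
  shows "we_tilde C cof we (yon C X) (yon C Y) (yon_arr C f)"
  unfolding we_tilde_def
proof (intro conjI allI impI)
  show "in_tilde C cof (yon C X)" "in_tilde C cof (yon C Y)"
    using yon_in_tilde hom_Obj[OF f] by auto
  show "nat_trans C (yon C X) (yon C Y) (yon_arr C f)" using yon_arr_nat_trans[OF f] .
next
  fix i u w
  assume "i \<in> cof \<and> nat_trans C (yon C (Dom C i)) (yon C X) u \<and>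
    nat_trans C (yon C (Cod C i)) (yon C Y) w \<and>
    nt_eq C (yon C (Dom C i)) (nt_comp (yon_arr C f) u) (nt_comp w (yon_arr C i))"
  then have i: "i \<in> cof" "i \<in> hom C (Dom C i) (Cod C i)"
    and u: "nat_trans C (yon C (Dom C i)) (yon C X) u"
    and w: "nat_trans C (yon C (Cod C i)) (yon C Y) w"
    and square: "nt_eq C (yon C (Dom C i)) (nt_comp (yon_arr C f) u) (nt_comp w (yon_arr C i))"
    using cof by (auto simp: hom_def)
  have A: "Dom C i \<in> Obj C" and B: "Cod C i \<in> Obj C" using hom_Obj[OF i(2)] by auto
  define u0 where "u0 = u (Dom C i) (Id C (Dom C i))"
  define w0 where "w0 = w (Cod C i) (Id C (Cod C i))"
  have u0: "u0 \<in> hom C (Dom C i) X" and w0: "w0 \<in> hom C (Cod C i) Y"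
    unfolding u0_def w0_def using nat_trans_yon_Id u w A B by auto
  have "f \<cdot> u0 = w0 \<cdot> i"
    using nt_eq_yonD[OF square A] nat_trans_yon_apply[OF w i(2)] homD[OF i(2)]
    unfolding u0_def w0_def by (simp add: nt_comp_def yon_arr_def)
  then obtain a0 k j c p h0 where a0: "a0 \<in> hom C (Cod C i) X" "a0 \<cdot> i = u0"
    and R: "rel_cyl C cof we i k j c p" and h0: "h0 \<in> hom C (Cod C c) Y"
    and hk: "h0 \<cdot> (c \<cdot> k) = f \<cdot> a0" and hj: "h0 \<cdot> (c \<cdot> j) = w0"
    using lifting i(1) u0 w0 homD[OF f] unfolding homotopy_lifting_def by metis
  have ck: "c \<cdot> k \<in> hom C (Cod C i) (Cod C c)" and cj: "c \<cdot> j \<in> hom C (Cod C i) (Cod C c)"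
    using rel_cyl_inclusions_hom[OF cof R] by auto
  note types = homD[OF i(2)] homD[OF a0(1)] homD[OF h0] homD[OF ck] homD[OF cj] homD[OF f]
  show "\<exists>a. nat_trans C (yon C (Cod C i)) (yon C X) a \<and>
         nt_eq C (yon C (Dom C i)) (nt_comp a (yon_arr C i)) u \<and>
         (\<exists>k j c p h. rel_cyl C cof we i k j c p \<and>
            nat_trans C (yon C (Cod C c)) (yon C Y) h \<and>
            nt_eq C (yon C (Cod C i)) (nt_comp h (yon_arr C (c \<cdot> k))) (nt_comp (yon_arr C f) a) \<and>
            nt_eq C (yon C (Cod C i)) (nt_comp h (yon_arr C (c \<cdot> j))) w)"
  proof (intro exI conjI)
    show "nat_trans C (yon C (Cod C i)) (yon C X) (yon_arr C a0)"
      using yon_arr_nat_trans[OF a0(1)] .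
    show "nat_trans C (yon C (Cod C c)) (yon C Y) (yon_arr C h0)"
      using yon_arr_nat_trans[OF h0] .
    show "nt_eq C (yon C (Dom C i)) (nt_comp (yon_arr C a0) (yon_arr C i)) u"
      by (rule nt_eq_yonI[OF nat_trans_comp[OF yon_arr_nat_trans[OF i(2)] yon_arr_nat_trans[OF a0(1)]] u])
        (use a0 A types in \<open>simp add: nt_comp_def yon_arr_def u0_def\<close>)
    show "nt_eq C (yon C (Cod C i)) (nt_comp (yon_arr C h0) (yon_arr C (c \<cdot> k)))
        (nt_comp (yon_arr C f) (yon_arr C a0))"
      by (rule nt_eq_yonI[OF nat_trans_comp[OF yon_arr_nat_trans[OF ck] yon_arr_nat_trans[OF h0]]
          nat_trans_comp[OF yon_arr_nat_trans[OF a0(1)] yon_arr_nat_trans[OF f]]])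
        (use B types hk in \<open>simp add: nt_comp_def yon_arr_def\<close>)
    show "nt_eq C (yon C (Cod C i)) (nt_comp (yon_arr C h0) (yon_arr C (c \<cdot> j))) w"
      by (rule nt_eq_yonI[OF nat_trans_comp[OF yon_arr_nat_trans[OF cj] yon_arr_nat_trans[OF h0]] w])
        (use B types hj in \<open>simp add: nt_comp_def yon_arr_def w0_def\<close>)
  qed (fact R)
qed

lemma we_tilde_yon_arr_iff:
  "cof \<subseteq> Arr C \<Longrightarrow> f \<in> hom C X Y \<Longrightarrow>
   we_tilde C cof we (yon C X) (yon C Y) (yon_arr C f) \<longleftrightarrow> homotopy_lifting C cof we f"
  using homotopy_lifting_if_we_tilde we_tilde_if_homotopy_lifting by blast

end

locale cylinder_cat =
  fixes C :: "('o, 'm) cat" and cof we :: "'m set"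
  assumes cylinder: "cylinder_category C cof we"

sublocale cylinder_cat \<subseteq> small_cat C
  using cylinder unfolding cylinder_category_def by unfold_locales blast

context cylinder_cat
begin

lemma cof_Arr: "cof \<subseteq> Arr C"
  and we_Arr: "we \<subseteq> Arr C"
  using cylinder unfolding cylinder_category_def by simp_all

lemma iso_cof_we: "iso C f \<Longrightarrow> f \<in> cof \<and> f \<in> we"
  using cylinder unfolding cylinder_category_def by (elim conjE) metis

lemma Id_we: "A \<in> Obj C \<Longrightarrow> Id C A \<in> we"
  using iso_cof_we iso_Id by blast

lemma cof_comp: "f \<in> cof \<Longrightarrow> g \<in> cof \<Longrightarrow> Cod C f = Dom C g \<Longrightarrow> g \<cdot> f \<in> cof"
  using cylinder unfolding cylinder_category_def by (elim conjE) metis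

lemma we_comp: "f \<in> we \<Longrightarrow> g \<in> we \<Longrightarrow> Cod C f = Dom C g \<Longrightarrow> g \<cdot> f \<in> we"
  using cylinder unfolding cylinder_category_def by (elim conjE) metis

lemma we_two_out_of_six:
  "f \<in> Arr C \<Longrightarrow> g \<in> Arr C \<Longrightarrow> h \<in> Arr C \<Longrightarrow> Cod C h = Dom C g \<Longrightarrow> Cod C g = Dom C f \<Longrightarrow>
   f \<cdot> g \<in> we \<Longrightarrow> g \<cdot> h \<in> we \<Longrightarrow> f \<in> we \<and> g \<in> we \<and> h \<in> we"
  using cylinder unfolding cylinder_category_def by (elim conjE) metis

lemma we_cancel_right: "g \<in> hom C A B \<Longrightarrow> f \<in> hom C B D \<Longrightarrow> f \<cdot> g \<in> we \<Longrightarrow> g \<in> we \<Longrightarrow> f \<in> we"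
  using we_two_out_of_six[of f g "Id C A"] hom_Obj[of g A B] by (auto simp: hom_def)

lemma we_cancel_left: "g \<in> hom C A B \<Longrightarrow> f \<in> hom C B D \<Longrightarrow> f \<cdot> g \<in> we \<Longrightarrow> f \<in> we \<Longrightarrow> g \<in> we"
  using we_two_out_of_six[of "Id C D" f g] hom_Obj[of f B D] by (auto simp: hom_def)

lemma pushout_exists: "i \<in> cof \<Longrightarrow> f \<in> Arr C \<Longrightarrow> Dom C f = Dom C i \<Longrightarrow> \<exists>k j. pushout C i f k j"
  using cylinder unfolding cylinder_category_def by (elim conjE) metis

lemma pushout_cof: "i \<in> cof \<Longrightarrow> pushout C i f k j \<Longrightarrow> j \<in> cof"
  using cylinder unfolding cylinder_category_def by (elim conjE) metis

lemma pushout_trivial_cof: "i \<in> cof \<Longrightarrow> i \<in> we \<Longrightarrow> pushout C i f k j \<Longrightarrow> j \<in> cof \<and> j \<in> we"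
  using cylinder unfolding cylinder_category_def by (elim conjE) metis

lemma trivial_cof_retraction:
  "i \<in> cof \<Longrightarrow> i \<in> we \<Longrightarrow> \<exists>r\<in>hom C (Cod C i) (Dom C i). r \<cdot> i = Id C (Dom C i)"
  using cylinder unfolding cylinder_category_def by (elim conjE) metis

definition initial_obj :: 'o where "initial_obj = (SOME z. initial C z)"

definition initial_arr :: "'o \<Rightarrow> 'm" where "initial_arr X = (THE e. e \<in> hom C initial_obj X)"

lemma initial_initial_obj: "initial C initial_obj"
  using cylinder unfolding cylinder_category_def initial_obj_def by (metis someI_ex)

lemma initial_arr_hom: "X \<in> Obj C \<Longrightarrow> initial_arr X \<in> hom C initial_obj X"
  unfolding initial_arr_def using initial_initial_obj unfolding initial_def by (metis theI')

lemma initial_arr_unique: "u \<in> hom C initial_obj X \<Longrightarrow> v \<in> hom C initial_obj X \<Longrightarrow> u = v"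
  using initial_initial_obj hom_Obj unfolding initial_def by blast

lemma initial_arr_cof: "X \<in> Obj C \<Longrightarrow> initial_arr X \<in> cof"
  using cylinder initial_initial_obj initial_arr_hom unfolding cylinder_category_def by (elim conjE) metis

lemma coproduct_exists: "U \<in> Obj C \<Longrightarrow> V \<in> Obj C \<Longrightarrow> \<exists>k j. pushout C (initial_arr U) (initial_arr V) k j"
  using pushout_exists initial_arr_cof initial_arr_hom by (simp add: hom_def)

lemma coproduct_copair:
  assumes P: "pushout C (initial_arr U) (initial_arr V) k j" and U: "U \<in> Obj C" and V: "V \<in> Obj C"
    and a: "a \<in> hom C U Q" and b: "b \<in> hom C V Q"
  shows "\<exists>u. u \<in> hom C (Cod C k) Q \<and> u \<cdot> k = a \<and> u \<cdot> j = b"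
proof -
  have "a \<cdot> initial_arr U = b \<cdot> initial_arr V"
    using a b initial_arr_hom[OF U] initial_arr_hom[OF V] by (intro initial_arr_unique comp_hom)
  then show ?thesis
    using pushout_copair[OF P] a b initial_arr_hom[OF U] initial_arr_hom[OF V] by (auto simp: hom_def)
qed

lemma initial_rel_cyl_exists:
  assumes U: "U \<in> Obj C"
  shows "\<exists>k j c p. rel_cyl C cof we (initial_arr U) k j c p"
proof -
  obtain k j where P: "pushout C (initial_arr U) (initial_arr U) k j"
    using coproduct_exists[OF U U] by blast
  obtain d where d: "d \<in> hom C (Cod C k) U" "d \<cdot> k = Id C U" "d \<cdot> j = Id C U"
    using coproduct_copair[OF P U U Id_hom[OF U] Id_hom[OF U]] by blast
  then obtain c p where "c \<in> cof" "p \<in> we" "Dom C c = Cod C k" "Cod C c = Dom C p" "Cod C p = U" "p \<cdot> c = d"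
    using cylinder P U initial_initial_obj initial_arr_hom unfolding cylinder_category_def
    by (elim conjE) metis
  then have "rel_cyl C cof we (initial_arr U) k j c p"
    unfolding rel_cyl_def using P d initial_arr_cof[OF U] initial_arr_hom[OF U] by (auto simp: hom_def)
  then show ?thesis by blast
qed

lemma rel_cylD:
  assumes R: "rel_cyl C cof we i k j c p" and i: "i \<in> hom C A B"
  shows "pushout C i i k j" and "i \<in> cof" and "c \<in> cof" and "p \<in> we"
    and "k \<in> hom C B (Cod C k)" and "j \<in> hom C B (Cod C k)"
    and "c \<in> hom C (Cod C k) (Cod C c)" and "p \<in> hom C (Cod C c) B"
    and "p \<cdot> (c \<cdot> k) = Id C B" and "p \<cdot> (c \<cdot> j) = Id C B"
proof -
  show P: "pushout C i i k j" and "i \<in> cof" and "c \<in> cof" and "p \<in> we"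
    using R unfolding rel_cyl_def by auto
  show k: "k \<in> hom C B (Cod C k)" and j: "j \<in> hom C B (Cod C k)"
    using pushout_hom[OF P i i] by auto
  show c: "c \<in> hom C (Cod C k) (Cod C c)" and p: "p \<in> hom C (Cod C c) B"
    using R i cof_Arr we_Arr unfolding rel_cyl_def by (auto simp: hom_def)
  show "p \<cdot> (c \<cdot> k) = Id C B" and "p \<cdot> (c \<cdot> j) = Id C B"
    using R homD[OF i] homD[OF k] homD[OF j] homD[OF c] homD[OF p] unfolding rel_cyl_def by auto
qed

lemma rel_cyl_inclusions_trivial_cof:
  assumes R: "rel_cyl C cof we i k j c p" and i: "i \<in> hom C A B"
  shows "c \<cdot> k \<in> cof" and "c \<cdot> k \<in> we" and "c \<cdot> j \<in> cof" and "c \<cdot> j \<in> we"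
proof -
  note cyl = rel_cylD[OF R i]
  have B: "B \<in> Obj C" using hom_Obj[OF i] by blast
  have "k \<in> cof" and "j \<in> cof"
    using pushout_cof[OF cyl(2) pushout_sym[OF cyl(1)]] pushout_cof[OF cyl(2) cyl(1)] .
  then show "c \<cdot> k \<in> cof" and "c \<cdot> j \<in> cof"
    using cof_comp cyl(3,5-7) homD by metis+
  show "c \<cdot> k \<in> we" and "c \<cdot> j \<in> we"
    using we_cancel_left[OF comp_hom[OF cyl(5,7)] cyl(8)] we_cancel_left[OF comp_hom[OF cyl(6,7)] cyl(8)]
      cyl(4,9,10) Id_we[OF B] by auto
qed

subsection \<open>Factorization\<close>

lemma coproduct_pushout_square:
  assumes P1: "pushout C (initial_arr U) (initial_arr U) k j"
    and P2: "pushout C (initial_arr U) (initial_arr V) k' j'"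
    and U: "U \<in> Obj C" and V: "V \<in> Obj C" and g: "g \<in> hom C U V"
    and \<mu>: "\<mu> \<in> hom C (Cod C k) (Cod C k')" and \<mu>k: "\<mu> \<cdot> k = k'" and \<mu>j: "\<mu> \<cdot> j = j' \<cdot> g"
  shows "pushout C j g \<mu> j'"
proof -
  note hom1 = pushout_hom[OF P1 initial_arr_hom[OF U] initial_arr_hom[OF U]]
    and hom2 = pushout_hom[OF P2 initial_arr_hom[OF U] initial_arr_hom[OF V]]
  note types = homD[OF g] homD[OF \<mu>] homD[OF hom1(1)] homD[OF hom1(2)] homD[OF hom2(1)] homD[OF hom2(2)]
  have univ: "\<exists>!u. u \<in> hom C (Cod C \<mu>) Q \<and> u \<cdot> \<mu> = a \<and> u \<cdot> j' = b"
    if a: "a \<in> hom C (Cod C j) Q" and b: "b \<in> hom C (Cod C g) Q" and ab: "a \<cdot> j = b \<cdot> g" for Q a b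
  proof -
    have "a \<cdot> k \<in> hom C U Q" using a types by (auto simp: hom_def)
    then obtain \<gamma> where \<gamma>: "\<gamma> \<in> hom C (Cod C k') Q" "\<gamma> \<cdot> k' = a \<cdot> k" "\<gamma> \<cdot> j' = b"
      using coproduct_copair[OF P2 U V] b types by (auto simp: hom_def)
    note types' = homD[OF a] homD[OF b] homD[OF \<gamma>(1)]
    show ?thesis
    proof (rule ex1I)
      have "\<gamma> \<cdot> \<mu> = a"
      proof (rule pushout_eqI[OF P1, of _ Q])
        show "\<gamma> \<cdot> \<mu> \<in> hom C (Cod C k) Q" "a \<in> hom C (Cod C k) Q" using types types' by (auto simp: hom_def)
        show "(\<gamma> \<cdot> \<mu>) \<cdot> k = a \<cdot> k" using types types' \<mu>k \<gamma>(2) by simp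
        show "(\<gamma> \<cdot> \<mu>) \<cdot> j = a \<cdot> j" using types types' \<mu>j comp_reassoc[OF \<gamma>(3)] ab by simp
      qed
      then show "\<gamma> \<in> hom C (Cod C \<mu>) Q \<and> \<gamma> \<cdot> \<mu> = a \<and> \<gamma> \<cdot> j' = b" using \<gamma> types by simp
    next
      fix v assume v: "v \<in> hom C (Cod C \<mu>) Q \<and> v \<cdot> \<mu> = a \<and> v \<cdot> j' = b"
      show "v = \<gamma>"
      proof (rule pushout_eqI[OF P2 _ \<gamma>(1)])
        show "v \<in> hom C (Cod C k') Q" using v types by simp
        have "v \<cdot> (\<mu> \<cdot> k) = a \<cdot> k" using v types by (intro comp_reassoc) (auto simp: hom_def)
        then show "v \<cdot> k' = \<gamma> \<cdot> k'" using \<mu>k \<gamma>(2) by simp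
        show "v \<cdot> j' = \<gamma> \<cdot> j'" using v \<gamma>(3) by simp
      qed
    qed
  qed
  show ?thesis
    unfolding pushout_def using types \<mu>j univ by auto
qed

lemma mapping_cylinder:
  assumes g: "g \<in> hom C U V"
  shows "\<exists>M s t q. s \<in> hom C U M \<and> s \<in> cof \<and> t \<in> hom C V M \<and> t \<in> we \<and>
    q \<in> hom C M V \<and> q \<cdot> s = g \<and> q \<cdot> t = Id C V"
proof -
  have U: "U \<in> Obj C" and V: "V \<in> Obj C" using hom_Obj[OF g] by auto
  obtain k j c \<sigma> where R: "rel_cyl C cof we (initial_arr U) k j c \<sigma>"
    using initial_rel_cyl_exists[OF U] by blast
  note cyl = rel_cylD[OF R initial_arr_hom[OF U]]
  obtain k' j' where P2: "pushout C (initial_arr U) (initial_arr V) k' j'"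
    using coproduct_exists[OF U V] by blast
  note hom2 = pushout_hom[OF P2 initial_arr_hom[OF U] initial_arr_hom[OF V]]
  obtain \<mu> where \<mu>: "\<mu> \<in> hom C (Cod C k) (Cod C k')" "\<mu> \<cdot> k = k'" "\<mu> \<cdot> j = j' \<cdot> g"
    using coproduct_copair[OF cyl(1) U U hom2(1) comp_hom[OF g hom2(2)]] by blast
  obtain G m where P3: "pushout C c \<mu> G m"
    using pushout_exists[OF cyl(3), of \<mu>] cyl(7) \<mu>(1) by (auto simp: hom_def)
  note hom3 = pushout_hom[OF P3 cyl(7) \<mu>(1)]
  note types = homD[OF g] homD[OF \<mu>(1)] homD[OF hom2(1)] homD[OF hom2(2)] homD[OF hom3(1)] homD[OF hom3(2)]
    homD[OF cyl(5)] homD[OF cyl(6)] homD[OF cyl(7)] homD[OF cyl(8)]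
  \<comment> \<open>\<open>Cod G\<close> is the mapping cylinder \<open>I U \<squnion>\<^bsub>U \<squnion> U\<^esub> (U \<squnion> V)\<close>, and \<open>m j'\<close> is a pushout of the
    trivial cofibration \<open>c j : U \<rightarrow> I U\<close> along \<open>g\<close>.\<close>
  have "pushout C (c \<cdot> j) g G (m \<cdot> j')"
    using pushout_paste[OF coproduct_pushout_square[OF cyl(1) P2 U V g \<mu>] P3] .
  then have t_we: "m \<cdot> j' \<in> we"
    using pushout_trivial_cof rel_cyl_inclusions_trivial_cof[OF R initial_arr_hom[OF U]] by blast
  have s_cof: "m \<cdot> k' \<in> cof"
    using cof_comp pushout_cof[OF cyl(3) P3] pushout_cof[OF initial_arr_cof[OF V] pushout_sym[OF P2]]
      types by metis
  obtain \<beta> where \<beta>: "\<beta> \<in> hom C (Cod C k') V" "\<beta> \<cdot> k' = g" "\<beta> \<cdot> j' = Id C V"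
    using coproduct_copair[OF P2 U V g Id_hom[OF V]] by blast
  have "(g \<cdot> \<sigma>) \<cdot> c = \<beta> \<cdot> \<mu>"
  proof (rule pushout_eqI[OF cyl(1), of _ V])
    show "(g \<cdot> \<sigma>) \<cdot> c \<in> hom C (Cod C k) V" "\<beta> \<cdot> \<mu> \<in> hom C (Cod C k) V"
      using types homD[OF \<beta>(1)] by (auto simp: hom_def)
    show "((g \<cdot> \<sigma>) \<cdot> c) \<cdot> k = (\<beta> \<cdot> \<mu>) \<cdot> k"
      using types homD[OF \<beta>(1)] cyl(9) \<mu>(2) \<beta>(2) U by simp
    show "((g \<cdot> \<sigma>) \<cdot> c) \<cdot> j = (\<beta> \<cdot> \<mu>) \<cdot> j"
      using types homD[OF \<beta>(1)] cyl(10) \<mu>(3) \<beta>(3) comp_reassoc[OF \<beta>(3)] U V by simp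
  qed
  then obtain q where q: "q \<in> hom C (Cod C G) V" "q \<cdot> G = g \<cdot> \<sigma>" "q \<cdot> m = \<beta>"
    using pushout_copair[OF P3, of "g \<cdot> \<sigma>" V \<beta>] types \<beta>(1) by (auto simp: hom_def)
  have "q \<cdot> (m \<cdot> k') = g" "q \<cdot> (m \<cdot> j') = Id C V"
    using comp_reassoc[OF q(3)] types homD[OF q(1)] \<beta>(2,3) by simp_all
  then show ?thesis
    using s_cof t_we q(1) types by (intro exI[of _ "Cod C G"] exI conjI) (auto simp: hom_def)
qed

lemma cof_we_factorization:
  assumes g: "g \<in> hom C U V"
  shows "\<exists>M c p. c \<in> hom C U M \<and> c \<in> cof \<and> p \<in> hom C M V \<and> p \<in> we \<and> p \<cdot> c = g"
proof -
  obtain M s t q where "s \<in> hom C U M" "s \<in> cof" "t \<in> hom C V M" "t \<in> we" "q \<in> hom C M V"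
    "q \<cdot> s = g" "q \<cdot> t = Id C V"
    using mapping_cylinder[OF g] by blast
  moreover have "V \<in> Obj C" using hom_Obj[OF g] by blast
  ultimately show ?thesis using we_cancel_right Id_we by metis
qed

lemma rel_cyl_exists:
  assumes i: "i \<in> hom C A B" and "i \<in> cof"
  shows "\<exists>k j c p. rel_cyl C cof we i k j c p"
proof -
  have B: "B \<in> Obj C" using hom_Obj[OF i] by blast
  obtain k j where P: "pushout C i i k j" using pushout_exists[OF assms(2), of i] i by (auto simp: hom_def)
  obtain d where d: "d \<in> hom C (Cod C k) B" "d \<cdot> k = Id C B" "d \<cdot> j = Id C B"
    using pushout_copair[OF P, of "Id C B" B "Id C B"] i B by (auto simp: hom_def)
  obtain M c p where "c \<in> hom C (Cod C k) M" "c \<in> cof" "p \<in> hom C M B" "p \<in> we" "p \<cdot> c = d"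
    using cof_we_factorization[OF d(1)] by blast
  then have "rel_cyl C cof we i k j c p"
    unfolding rel_cyl_def using assms P d by (auto simp: hom_def)
  then show ?thesis by blast
qed

subsection \<open>Weak equivalences and homotopy lifting\<close>

lemma cof_extension:
  assumes c: "c \<in> hom C D I" "c \<in> cof" and \<psi>: "\<psi> \<in> hom C D E"
    and n: "n \<in> hom C E N" "n \<in> we" and t: "t \<in> hom C I N" and tc: "t \<cdot> c = n \<cdot> \<psi>"
  shows "\<exists>H\<in>hom C I E. H \<cdot> c = \<psi>"
proof -
  obtain \<kappa> m where P: "pushout C c \<psi> \<kappa> m"
    using pushout_exists[OF c(2), of \<psi>] c \<psi> by (auto simp: hom_def)
  note homs = pushout_hom[OF P c(1) \<psi>]
  obtain \<tau> where \<tau>: "\<tau> \<in> hom C (Cod C \<kappa>) N" "\<tau> \<cdot> \<kappa> = t" "\<tau> \<cdot> m = n"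
    using pushout_copair[OF P, of t N n] c \<psi> n t tc by (auto simp: hom_def)
  obtain L c' p where c': "c' \<in> hom C (Cod C \<kappa>) L" "c' \<in> cof" and p: "p \<in> hom C L N" "p \<in> we"
    and pc': "p \<cdot> c' = \<tau>"
    using cof_we_factorization[OF \<tau>(1)] by blast
  note types = homD[OF homs(1)] homD[OF homs(2)] homD[OF c'(1)] homD[OF p(1)] homD[OF c(1)] homD[OF \<psi>]
  have l: "c' \<cdot> m \<in> hom C E L" using types by (simp add: hom_def)
  have "c' \<cdot> m \<in> cof" using cof_comp[OF pushout_cof[OF c(2) P] c'(2)] types by simp
  moreover have "p \<cdot> (c' \<cdot> m) = n" using comp_reassoc[OF pc'] \<tau>(3) types by simp
  then have "c' \<cdot> m \<in> we" using we_cancel_left[OF l p(1)] n(2) p(2) by simp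
  ultimately obtain \<rho> where \<rho>: "\<rho> \<in> hom C L E" "\<rho> \<cdot> (c' \<cdot> m) = Id C E"
    using trivial_cof_retraction l by (auto simp: hom_def)
  have "(\<rho> \<cdot> c' \<cdot> \<kappa>) \<cdot> c = \<rho> \<cdot> c' \<cdot> m \<cdot> \<psi>"
    using pushoutD[OF P] types homD[OF \<rho>(1)] by simp
  also have "\<dots> = \<psi>" using comp_reassoc[OF \<rho>(2)] types homD[OF \<rho>(1)] by simp
  finally show ?thesis using \<rho>(1) types by (intro bexI[of _ "\<rho> \<cdot> c' \<cdot> \<kappa>"]) (auto simp: hom_def)
qed

lemma we_square_factors_through_trivial_cof:
  assumes f: "f \<in> hom C X Y" "f \<in> we" and i: "i \<in> hom C A B" "i \<in> cof"
    and u: "u \<in> hom C A X" and w: "w \<in> hom C B Y" and square: "f \<cdot> u = w \<cdot> i"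
  shows "\<exists>N e q \<beta>. e \<in> hom C X N \<and> e \<in> cof \<and> e \<in> we \<and> q \<in> hom C N Y \<and> q \<cdot> e = f \<and>
    \<beta> \<in> hom C B N \<and> \<beta> \<cdot> i = e \<cdot> u \<and> q \<cdot> \<beta> = w"
proof -
  obtain b x where P: "pushout C i u b x"
    using pushout_exists[OF i(2), of u] i u by (auto simp: hom_def)
  note homs = pushout_hom[OF P i(1) u]
  obtain \<phi> where \<phi>: "\<phi> \<in> hom C (Cod C b) Y" "\<phi> \<cdot> b = w" "\<phi> \<cdot> x = f"
    using pushout_copair[OF P, of w Y f] w f i u square by (auto simp: hom_def)
  obtain N c q where c: "c \<in> hom C (Cod C b) N" "c \<in> cof" and q: "q \<in> hom C N Y" "q \<in> we"
    and qc: "q \<cdot> c = \<phi>"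
    using cof_we_factorization[OF \<phi>(1)] by blast
  note types = homD[OF homs(1)] homD[OF homs(2)] homD[OF c(1)] homD[OF q(1)] homD[OF i(1)] homD[OF u]
  have e: "c \<cdot> x \<in> hom C X N" using types by (simp add: hom_def)
  have qe: "q \<cdot> (c \<cdot> x) = f" using comp_reassoc[OF qc] \<phi>(3) types by simp
  have "c \<cdot> x \<in> cof" using cof_comp[OF pushout_cof[OF i(2) P] c(2)] types by simp
  moreover have "c \<cdot> x \<in> we" using we_cancel_left[OF e q(1)] qe f(2) q(2) by simp
  moreover have "(c \<cdot> b) \<cdot> i = (c \<cdot> x) \<cdot> u" using pushoutD[OF P] types by simp
  moreover have "q \<cdot> (c \<cdot> b) = w" using comp_reassoc[OF qc] \<phi>(2) types by simp
  ultimately show ?thesis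
    using e q(1) qe types by (intro exI[of _ N] exI[of _ "c \<cdot> x"] exI[of _ q] exI[of _ "c \<cdot> b"])
      (auto simp: hom_def)
qed

lemma pushout_legs_homotopic:
  assumes e: "e \<in> hom C X N" "e \<in> cof" "e \<in> we" and P: "pushout C e e k' j'"
    and R: "rel_cyl C cof we i k j c p" and i: "i \<in> hom C A B"
    and \<beta>: "\<beta> \<in> hom C B N" and u: "u \<in> hom C A X" and \<beta>i: "\<beta> \<cdot> i = e \<cdot> u"
  shows "\<exists>H\<in>hom C (Cod C c) (Cod C k'). H \<cdot> (c \<cdot> k) = k' \<cdot> \<beta> \<and> H \<cdot> (c \<cdot> j) = j' \<cdot> \<beta>"
proof -
  note cyl = rel_cylD[OF R i] and legs = pushout_hom[OF P e(1) e(1)]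
  have N: "N \<in> Obj C" using hom_Obj[OF e(1)] by blast
  note types = homD[OF e(1)] homD[OF legs(1)] homD[OF legs(2)] homD[OF \<beta>] homD[OF u] homD[OF i]
    homD[OF cyl(5)] homD[OF cyl(6)] homD[OF cyl(7)] homD[OF cyl(8)]
  have "k' \<cdot> e = j' \<cdot> e" using pushoutD[OF P] by blast
  then have "k' \<cdot> (e \<cdot> u) = (j' \<cdot> e) \<cdot> u" by (rule comp_reassoc) (use types in auto)
  then have "(k' \<cdot> \<beta>) \<cdot> i = (j' \<cdot> \<beta>) \<cdot> i" using types \<beta>i by simp
  then obtain \<psi> where \<psi>: "\<psi> \<in> hom C (Cod C k) (Cod C k')" "\<psi> \<cdot> k = k' \<cdot> \<beta>" "\<psi> \<cdot> j = j' \<cdot> \<beta>"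
    using pushout_copair[OF cyl(1), of "k' \<cdot> \<beta>" "Cod C k'" "j' \<cdot> \<beta>"] types by (auto simp: hom_def)
  obtain d where d: "d \<in> hom C (Cod C k') N" "d \<cdot> k' = Id C N" "d \<cdot> j' = Id C N"
    using pushout_copair[OF P, of "Id C N" N "Id C N"] N types by (auto simp: hom_def)
  have "k' \<in> we" using pushout_trivial_cof[OF e(2,3) pushout_sym[OF P]] by blast
  then have d_we: "d \<in> we" using we_cancel_right[OF legs(1) d(1)] d(2) Id_we[OF N] by simp
  note types' = homD[OF \<psi>(1)] homD[OF d(1)]
  have "(\<beta> \<cdot> p) \<cdot> c = d \<cdot> \<psi>"
  proof (rule pushout_eqI[OF cyl(1), of _ N])
    show "(\<beta> \<cdot> p) \<cdot> c \<in> hom C (Cod C k) N" "d \<cdot> \<psi> \<in> hom C (Cod C k) N"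
      using types types' by (auto simp: hom_def)
    show "((\<beta> \<cdot> p) \<cdot> c) \<cdot> k = (d \<cdot> \<psi>) \<cdot> k"
      using types types' cyl(9) \<psi>(2) comp_reassoc[OF d(2)] by simp
    show "((\<beta> \<cdot> p) \<cdot> c) \<cdot> j = (d \<cdot> \<psi>) \<cdot> j"
      using types types' cyl(10) \<psi>(3) comp_reassoc[OF d(3)] by simp
  qed
  then obtain H where "H \<in> hom C (Cod C c) (Cod C k')" "H \<cdot> c = \<psi>"
    using cof_extension[OF cyl(7,3) \<psi>(1) d(1) d_we comp_hom[OF cyl(8) \<beta>]] by blast
  then show ?thesis using comp_reassoc[of H c \<psi>] \<psi> types by (auto simp: hom_def)
qed

lemma homotopy_lifting_if_we:
  assumes "f \<in> Arr C" and "f \<in> we"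
  shows "homotopy_lifting C cof we f"
  unfolding homotopy_lifting_def
proof (intro allI impI)
  fix i u w
  assume "i \<in> cof \<and> u \<in> hom C (Dom C i) (Dom C f) \<and> w \<in> hom C (Cod C i) (Cod C f) \<and> f \<cdot> u = w \<cdot> i"
  then have i: "i \<in> hom C (Dom C i) (Cod C i)" "i \<in> cof" and u: "u \<in> hom C (Dom C i) (Dom C f)"
    and w: "w \<in> hom C (Cod C i) (Cod C f)" and square: "f \<cdot> u = w \<cdot> i"
    using cof_Arr by (auto simp: hom_def)
  have f: "f \<in> hom C (Dom C f) (Cod C f)" using assms(1) by (simp add: hom_def)
  obtain N e q \<beta> where e: "e \<in> hom C (Dom C f) N" "e \<in> cof" "e \<in> we"
    and q: "q \<in> hom C N (Cod C f)" "q \<cdot> e = f"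
    and \<beta>: "\<beta> \<in> hom C (Cod C i) N" "\<beta> \<cdot> i = e \<cdot> u" "q \<cdot> \<beta> = w"
    using we_square_factors_through_trivial_cof[OF f assms(2) i u w square] by blast
  obtain r where r: "r \<in> hom C N (Dom C f)" "r \<cdot> e = Id C (Dom C f)"
    using trivial_cof_retraction[OF e(2,3)] e(1) by (auto simp: hom_def)
  note types = homD[OF f] homD[OF i(1)] homD[OF u] homD[OF e(1)] homD[OF \<beta>(1)] homD[OF r(1)]
  have "(r \<cdot> \<beta>) \<cdot> i = u" using types \<beta>(2) comp_reassoc[OF r(2)] Dom_Obj by simp
  obtain k' j' where P: "pushout C e e k' j'" using pushout_exists[OF e(2), of e] types by blast
  note legs = pushout_hom[OF P e(1) e(1)]
  obtain \<gamma> where \<gamma>: "\<gamma> \<in> hom C (Cod C k') (Cod C f)" "\<gamma> \<cdot> k' = f \<cdot> r" "\<gamma> \<cdot> j' = q"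
    using pushout_copair[OF P, of "f \<cdot> r" "Cod C f" q] q r types Dom_Obj by (auto simp: hom_def)
  obtain k j c p where R: "rel_cyl C cof we i k j c p" using rel_cyl_exists[OF i] by blast
  obtain H where H: "H \<in> hom C (Cod C c) (Cod C k')" "H \<cdot> (c \<cdot> k) = k' \<cdot> \<beta>" "H \<cdot> (c \<cdot> j) = j' \<cdot> \<beta>"
    using pushout_legs_homotopic[OF e P R i(1) \<beta>(1) u \<beta>(2)] by blast
  note types' = homD[OF legs(1)] homD[OF legs(2)] homD[OF \<gamma>(1)] homD[OF H(1)]
    homD[OF rel_cylD(5)[OF R i(1)]] homD[OF rel_cylD(6)[OF R i(1)]] homD[OF rel_cylD(7)[OF R i(1)]]
  have "(\<gamma> \<cdot> H) \<cdot> (c \<cdot> k) = f \<cdot> (r \<cdot> \<beta>)"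
    using types types' H(2) comp_reassoc[OF \<gamma>(2)] by simp
  moreover have "(\<gamma> \<cdot> H) \<cdot> (c \<cdot> j) = w"
    using types types' H(3) comp_reassoc[OF \<gamma>(3)] \<beta>(3) by simp
  moreover have "r \<cdot> \<beta> \<in> hom C (Cod C i) (Dom C f)" "\<gamma> \<cdot> H \<in> hom C (Cod C c) (Cod C f)"
    using types types' by (auto simp: hom_def)
  ultimately show "\<exists>a\<in>hom C (Cod C i) (Dom C f). a \<cdot> i = u \<and>
    (\<exists>k j c p h. rel_cyl C cof we i k j c p \<and> h \<in> hom C (Cod C c) (Cod C f) \<and>
       h \<cdot> (c \<cdot> k) = f \<cdot> a \<and> h \<cdot> (c \<cdot> j) = w)"
    using \<open>(r \<cdot> \<beta>) \<cdot> i = u\<close> R by blast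
qed

lemma homotopic_to_we:
  assumes R: "rel_cyl C cof we i k j c p" and i: "i \<in> hom C A B"
    and H: "H \<in> hom C (Cod C c) Z" and "H \<cdot> (c \<cdot> j) \<in> we"
  shows "H \<cdot> (c \<cdot> k) \<in> we"
proof -
  note cyl = rel_cylD[OF R i] and ends = rel_cyl_inclusions_trivial_cof[OF R i]
  have cj: "c \<cdot> j \<in> hom C B (Cod C c)" and ck: "c \<cdot> k \<in> hom C B (Cod C c)"
    using cyl(5-7) by (auto intro: comp_hom)
  have "H \<in> we" using we_cancel_right[OF cj H] ends(4) assms(4) by blast
  then show ?thesis using we_comp[OF ends(2)] homD[OF ck] homD[OF H] by simp
qed

lemma we_if_homotopy_lifting:
  assumes f: "f \<in> hom C X Y" and lifting: "homotopy_lifting C cof we f"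
  shows "f \<in> we"
proof -
  have X: "X \<in> Obj C" using hom_Obj[OF f] by blast
  obtain M c p where c: "c \<in> hom C X M" "c \<in> cof" and p: "p \<in> hom C M Y" "p \<in> we" and pc: "p \<cdot> c = f"
    using cof_we_factorization[OF f] by blast
  note types = homD[OF f] homD[OF c(1)] homD[OF p(1)]
  have M: "M \<in> Obj C" using hom_Obj[OF c(1)] by blast
  have "c \<in> cof \<and> Id C X \<in> hom C (Dom C c) (Dom C f) \<and> p \<in> hom C (Cod C c) (Cod C f) \<and>
      f \<cdot> Id C X = p \<cdot> c"
    using c p pc X types by (simp add: hom_def)
  then obtain a k j c' p' h where a: "a \<in> hom C M X" "a \<cdot> c = Id C X" and R: "rel_cyl C cof we c k j c' p'"
    and h: "h \<in> hom C (Cod C c') Y" "h \<cdot> (c' \<cdot> k) = f \<cdot> a" "h \<cdot> (c' \<cdot> j) = p"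
    using lifting types unfolding homotopy_lifting_def by metis
  note cyl = rel_cylD[OF R c(1)]
  note types' = homD[OF a(1)] homD[OF h(1)] homD[OF cyl(5)] homD[OF cyl(6)] homD[OF cyl(7)]
  obtain v where v: "v \<in> hom C (Cod C k) M" "v \<cdot> k = c \<cdot> a" "v \<cdot> j = Id C M"
    using pushout_copair[OF cyl(1), of "c \<cdot> a" M "Id C M"] types types' a(2) X M by (auto simp: hom_def)
  have "h \<cdot> c' = p \<cdot> v"
  proof (rule pushout_eqI[OF cyl(1), of _ Y])
    show "h \<cdot> c' \<in> hom C (Cod C k) Y" "p \<cdot> v \<in> hom C (Cod C k) Y"
      using types types' homD[OF v(1)] by (auto simp: hom_def)
    show "(h \<cdot> c') \<cdot> k = (p \<cdot> v) \<cdot> k"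
      using types types' homD[OF v(1)] v(2) h(2) comp_reassoc[OF pc] by simp
    show "(h \<cdot> c') \<cdot> j = (p \<cdot> v) \<cdot> j"
      using types types' homD[OF v(1)] v(3) h(3) M by simp
  qed
  then obtain G where G: "G \<in> hom C (Cod C c') M" "G \<cdot> c' = v"
    using cof_extension[OF cyl(7,3) v(1) p h(1)] by blast
  have "G \<cdot> (c' \<cdot> j) = Id C M" "G \<cdot> (c' \<cdot> k) = c \<cdot> a"
    using comp_reassoc[OF G(2)] v types' homD[OF G(1)] by simp_all
  then have "c \<cdot> a \<in> we" using homotopic_to_we[OF R c(1) G(1)] Id_we[OF M] by simp
  then have "c \<in> we"
    using we_two_out_of_six[of c a c] a(2) Id_we[OF X] types types' by simp
  then show ?thesis using we_comp[OF _ p(2)] pc types by metis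
qed

lemma we_iff_homotopy_lifting: "f \<in> Arr C \<Longrightarrow> f \<in> we \<longleftrightarrow> homotopy_lifting C cof we f"
  using homotopy_lifting_if_we we_if_homotopy_lifting by (auto simp: hom_def)

end

theorem mainTheorem8:
  fixes C :: "('o, 'm) cat" and cof we :: "'m set" and f :: 'm
  assumes "cylinder_category C cof we"
    and "f \<in> Arr C"
  shows "f \<in> we \<longleftrightarrow>
         we_tilde C cof we (yon C (Dom C f)) (yon C (Cod C f)) (yon_arr C f)"
proof -
  interpret cylinder_cat C cof we using assms(1) by unfold_locales
  show ?thesis
    using we_iff_homotopy_lifting[OF assms(2)] we_tilde_yon_arr_iff[OF cof_Arr, of f] assms(2)
    by (simp add: hom_def)
qed

end
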